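(* Let $f:Y\to X$ be a normal uniform Kan fibration with structure $\phi$. Then transport along degenerate paths is trivial: for every $k\ge1$, every $x:\mathrm{I}^k\to X$, every $\delta\in\{0,1\}$ and every $y:\mathrm{I}^k\to Y$ with $fy=x$, the transport of $y$ along the degenerate path $x\circ\mathrm{pr}:\mathrm{I}^k\times\mathrm{I}\to X$ starting at endpoint $\delta$ equals $y$.
   Context: Let $\mathbb{B}$ be the category of finite sets $[n]=\{\bot,x_1,\dots,x_n,\top\}$ ($n\ge0$, $\bot\ne\top$) and functions preserving $\bot,\top$; cartesian cubical sets are presheaves on $\mathbb{B}^{op}$. $\mathrm{I}^n$ is the representable on $[n]$, $\mathrm{I}^n\cong\mathrm{I}\times\dots\times\mathrm{I}$, $\mathrm{I}=\mathrm{I}^1$, $\mathrm{I}^0=1$; the two maps $[1]\to[0]$ give endpoints $0,1:1\to\mathrm{I}$. For $1\le i\le n$, $d\in\{0,1\}$, the face $\alpha_i^d:\mathrm{I}^{n-1}\to\mathrm{I}^n$ inserts $d$ in coordinate $i$; for $e\in\{0,1\}$ the open box $\sqcup^n_e\rightarrowtail\mathrm{I}^n$ is the union of the images of all faces $\alpha_i^d$ with $(i,d)\ne(1,e)$, with inclusion $i^n_e$. In particular $\sqcup^1_e$ is the endpoint $1-e$ of $\mathrm{I}$. A uniform Kan fibration structure on $f:Y\to X$: for each $n\ge1$, $e\in\{0,1\}$, $k\ge1$ and commutative square $b:\mathrm{I}^k\times\sqcup^n_e\to Y$, $a:\mathrm{I}^k\times\mathrm{I}^n\to X$ with $fb=a(1\times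 i^n_e)$, a chosen filler $\phi(a,b)$ ($\phi(a,b)(1\times i^n_e)=b$, $f\phi(a,b)=a$), with $\phi(a,b)(\alpha\times1)=\phi(a(\alpha\times1),b(\alpha\times1))$ for all $\alpha:\mathrm{I}^j\to\mathrm{I}^k$ ($j\ge1$). It is normal if for all $n\ge0$, $e$, $k\ge1$ and $c:\mathrm{I}^k\times\mathrm{I}^n\to Y$, with $\pi:\mathrm{I}^{n+1}\to\mathrm{I}^n$ forgetting the first coordinate, $\phi(fc(1\times\pi),c(1\times\pi)(1\times i^{n+1}_e))=c(1\times\pi)$. Transport: given $k\ge1$, $\delta\in\{0,1\}$, a path $p:\mathrm{I}^k\times\mathrm{I}\to X$ and $y:\mathrm{I}^k\to Y$ with $fy=p\circ(1\times\delta)$, regard $y$ as a map $\mathrm{I}^k\times\sqcup^1_{1-\delta}\to Y$; the transport of $y$ along $p$ is $\phi(p,y)\circ(1\times(1-\delta)):\mathrm{I}^k\to Y$. *)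

theory Defs
  imports Main
begin

text \<open>The object [n] = {bot, x_1, ..., x_n, top} is encoded as the set pts n of values of
type pt.  A morphism [n] -> [m] is a function pt => pt preserving Bot and Top, mapping
the generators Var 1..Var n into pts m, and (for extensionality) sending every
Var i with i outside 1..n to Bot.\<close>

datatype pt = Bot | Top | Var nat

definition pts :: "nat \<Rightarrow> pt set" where
  "pts n = {Bot, Top} \<union> Var ` {1..n}"

definition hom :: "nat \<Rightarrow> nat \<Rightarrow> (pt \<Rightarrow> pt) set" where
  "hom n m = {g. g Bot = Bot \<and> g Top = Top \<and> (\<forall>i\<in>{1..n}. g (Var i) \<in> pts m)
                 \<and> (\<forall>i. i \<notin> {1..n} \<longrightarrow> g (Var i) = Bot)}"

definition idm :: "nat \<Rightarrow> pt \<Rightarrow> pt" where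
  "idm n p = (case p of Var i \<Rightarrow> if i \<in> {1..n} then Var i else Bot | q \<Rightarrow> q)"

text \<open>Endpoints: False = 0 corresponds to Bot, True = 1 corresponds to Top.\<close>
definition ep :: "bool \<Rightarrow> pt" where
  "ep d = (if d then Top else Bot)"

record 'a cset =
  Cr :: "nat \<Rightarrow> 'a set"
  Act :: "nat \<Rightarrow> nat \<Rightarrow> (pt \<Rightarrow> pt) \<Rightarrow> 'a \<Rightarrow> 'a"

definition is_cset :: "'a cset \<Rightarrow> bool" where
  "is_cset Y \<longleftrightarrow>
     (\<forall>n m g y. g \<in> hom n m \<longrightarrow> y \<in> Cr Y n \<longrightarrow> Act Y n m g y \<in> Cr Y m) \<and>
     (\<forall>n y. y \<in> Cr Y n \<longrightarrow> Act Y n n (idm n) y = y) \<and>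
     (\<forall>n m p g h y. g \<in> hom n m \<longrightarrow> h \<in> hom m p \<longrightarrow> y \<in> Cr Y n \<longrightarrow>
         Act Y n p (h \<circ> g) y = Act Y m p h (Act Y n m g y))"

definition is_cmap :: "'a cset \<Rightarrow> 'b cset \<Rightarrow> (nat \<Rightarrow> 'a \<Rightarrow> 'b) \<Rightarrow> bool" where
  "is_cmap Y X f \<longleftrightarrow>
     (\<forall>n y. y \<in> Cr Y n \<longrightarrow> f n y \<in> Cr X n) \<and>
     (\<forall>n m g y. g \<in> hom n m \<longrightarrow> y \<in> Cr Y n \<longrightarrow> f m (Act Y n m g y) = Act X n m g (f n y))"

text \<open>By Yoneda, a map I^N -> Y is an element of Cr Y N; precomposing with the map
I^M -> I^N given by a B-morphism g : [N] -> [M] is Act Y N M g.  We identify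
I^k x I^n with I^(k+n), the I^k coordinates being x_1..x_k and the I^n coordinates
being x_(k+1)..x_(k+n).\<close>

text \<open>The subpresheaf I^k x (open box) of I^(k+n) at level m: those g : [k+n] -> [m]
lying in the image of some face alpha_i^d (i.e. g(x_(k+i)) = d) with (i,d) \<noteq> (1,e).\<close>
definition box :: "nat \<Rightarrow> nat \<Rightarrow> bool \<Rightarrow> nat \<Rightarrow> (pt \<Rightarrow> pt) set" where
  "box k n e m = {g \<in> hom (k + n) m.
      \<exists>i\<in>{1..n}. \<exists>d. (i, d) \<noteq> (1, e) \<and> g (Var (k + i)) = ep d}"

definition is_boxmap :: "'a cset \<Rightarrow> nat \<Rightarrow> nat \<Rightarrow> bool \<Rightarrow> (nat \<Rightarrow> (pt \<Rightarrow> pt) \<Rightarrow> 'a) \<Rightarrow> bool" where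
  "is_boxmap Y k n e b \<longleftrightarrow>
     (\<forall>m g. g \<in> box k n e m \<longrightarrow> b m g \<in> Cr Y m) \<and>
     (\<forall>m g. g \<notin> box k n e m \<longrightarrow> b m g = undefined) \<and>
     (\<forall>m p g h. g \<in> box k n e m \<longrightarrow> h \<in> hom m p \<longrightarrow> b p (h \<circ> g) = Act Y m p h (b m g))"

definition restr :: "'a cset \<Rightarrow> nat \<Rightarrow> nat \<Rightarrow> bool \<Rightarrow> 'a \<Rightarrow> nat \<Rightarrow> (pt \<Rightarrow> pt) \<Rightarrow> 'a" where
  "restr Y k n e z = (\<lambda>m g. if g \<in> box k n e m then Act Y (k + n) m g z else undefined)"

text \<open>For al : [k] -> [j] (i.e. alpha : I^j -> I^k), the morphism [k+n] -> [j+n]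
corresponding to alpha x 1 : I^j x I^n -> I^k x I^n.\<close>
definition prodmor :: "(pt \<Rightarrow> pt) \<Rightarrow> nat \<Rightarrow> nat \<Rightarrow> nat \<Rightarrow> pt \<Rightarrow> pt" where
  "prodmor al k j n p = (case p of
      Var i \<Rightarrow> if 1 \<le> i \<and> i \<le> k then al (Var i)
               else if k < i \<and> i \<le> k + n then Var (i - k + j) else Bot
    | q \<Rightarrow> q)"

definition boxpre :: "nat \<Rightarrow> nat \<Rightarrow> bool \<Rightarrow> (pt \<Rightarrow> pt) \<Rightarrow> nat \<Rightarrow>
    (nat \<Rightarrow> (pt \<Rightarrow> pt) \<Rightarrow> 'a) \<Rightarrow> nat \<Rightarrow> (pt \<Rightarrow> pt) \<Rightarrow> 'a" where
  "boxpre j n e al k b = (\<lambda>m g. if g \<in> box j n e m then b m (g \<circ> prodmor al k j n) else undefined)"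

text \<open>The morphism [k+n] -> [k+n+1] corresponding to 1 x pi : I^k x I^(n+1) -> I^k x I^n,
where pi forgets the first coordinate of I^(n+1).\<close>
definition projmor :: "nat \<Rightarrow> nat \<Rightarrow> pt \<Rightarrow> pt" where
  "projmor k n p = (case p of
      Var i \<Rightarrow> if 1 \<le> i \<and> i \<le> k then Var i
               else if k < i \<and> i \<le> k + n then Var (Suc i) else Bot
    | q \<Rightarrow> q)"

text \<open>The morphism [k] -> [k+1] corresponding to the projection pr : I^k x I -> I^k.\<close>
definition prmor :: "nat \<Rightarrow> pt \<Rightarrow> pt" where
  "prmor k p = (case p of Var i \<Rightarrow> if 1 \<le> i \<and> i \<le> k then Var i else Bot | q \<Rightarrow> q)"

text \<open>The morphism [k+1] -> [k] corresponding to 1 x d : I^k = I^k x 1 -> I^k x I.\<close>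
definition endmor :: "nat \<Rightarrow> bool \<Rightarrow> pt \<Rightarrow> pt" where
  "endmor k d p = (case p of
      Var i \<Rightarrow> if 1 \<le> i \<and> i \<le> k then Var i else if i = Suc k then ep d else Bot
    | q \<Rightarrow> q)"

text \<open>phi k n e a b is the chosen filler for a : I^k x I^n -> X (a \<in> Cr X (k+n)) and
b : I^k x (open box) -> Y; it is an element of Cr Y (k+n).\<close>
type_synonym ('a, 'b) filler =
  "nat \<Rightarrow> nat \<Rightarrow> bool \<Rightarrow> 'b \<Rightarrow> (nat \<Rightarrow> (pt \<Rightarrow> pt) \<Rightarrow> 'a) \<Rightarrow> 'a"

definition kan_square :: "'a cset \<Rightarrow> 'b cset \<Rightarrow> (nat \<Rightarrow> 'a \<Rightarrow> 'b) \<Rightarrow> nat \<Rightarrow> nat \<Rightarrow> bool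
    \<Rightarrow> 'b \<Rightarrow> (nat \<Rightarrow> (pt \<Rightarrow> pt) \<Rightarrow> 'a) \<Rightarrow> bool" where
  "kan_square Y X f k n e a b \<longleftrightarrow>
     a \<in> Cr X (k + n) \<and> is_boxmap Y k n e b \<and>
     (\<forall>m g. g \<in> box k n e m \<longrightarrow> f m (b m g) = Act X (k + n) m g a)"

definition uniform_kan :: "'a cset \<Rightarrow> 'b cset \<Rightarrow> (nat \<Rightarrow> 'a \<Rightarrow> 'b) \<Rightarrow> ('a, 'b) filler \<Rightarrow> bool" where
  "uniform_kan Y X f phi \<longleftrightarrow>
     (\<forall>n k e a b. 1 \<le> n \<longrightarrow> 1 \<le> k \<longrightarrow> kan_square Y X f k n e a b \<longrightarrow>
        phi k n e a b \<in> Cr Y (k + n) \<and>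
        restr Y k n e (phi k n e a b) = b \<and>
        f (k + n) (phi k n e a b) = a \<and>
        (\<forall>j al. 1 \<le> j \<longrightarrow> al \<in> hom k j \<longrightarrow>
           phi j n e (Act X (k + n) (j + n) (prodmor al k j n) a) (boxpre j n e al k b)
             = Act Y (k + n) (j + n) (prodmor al k j n) (phi k n e a b)))"

definition normal_kan :: "'a cset \<Rightarrow> 'b cset \<Rightarrow> (nat \<Rightarrow> 'a \<Rightarrow> 'b) \<Rightarrow> ('a, 'b) filler \<Rightarrow> bool" where
  "normal_kan Y X f phi \<longleftrightarrow>
     (\<forall>n e k c. 1 \<le> k \<longrightarrow> c \<in> Cr Y (k + n) \<longrightarrow>
        phi k (Suc n) e (Act X (k + n) (k + Suc n) (projmor k n) (f (k + n) c))
            (restr Y k (Suc n) e (Act Y (k + n) (k + Suc n) (projmor k n) c))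
          = Act Y (k + n) (k + Suc n) (projmor k n) c)"

text \<open>y : I^k -> Y regarded as a map I^k x (open box \<squnion>^1_(1-delta)) -> Y, the open box
being the endpoint delta.\<close>
definition pt_as_box :: "'a cset \<Rightarrow> nat \<Rightarrow> bool \<Rightarrow> 'a \<Rightarrow> nat \<Rightarrow> (pt \<Rightarrow> pt) \<Rightarrow> 'a" where
  "pt_as_box Y k delta y = (\<lambda>m g. if g \<in> box k 1 (\<not> delta) m then Act Y k m (g \<circ> prmor k) y else undefined)"

definition transport :: "'a cset \<Rightarrow> ('a, 'b) filler \<Rightarrow> nat \<Rightarrow> bool \<Rightarrow> 'b \<Rightarrow> 'a \<Rightarrow> 'a" where
  "transport Y phi k delta p y =
     Act Y (k + 1) k (endmor k (\<not> delta)) (phi k 1 (\<not> delta) p (pt_as_box Y k delta y))"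

end

theory Submission
  imports Defs
begin

text \<open>Normality at \<open>n = 0\<close> says that filling the open box of a degenerate square
\<open>c \<circ> pr\<close> returns \<open>c \<circ> pr\<close> itself. The data of the transport along \<open>x \<circ> pr\<close> is exactly
such a square with \<open>c = y\<close>, so the filler is \<open>y \<circ> pr\<close>, and its restriction to either
endpoint is \<open>y\<close> again.\<close>

lemma Act_comp:
  assumes "is_cset Y" and "g \<in> hom n m" and "h \<in> hom m p" and "y \<in> Cr Y n"
  shows "Act Y m p h (Act Y n m g y) = Act Y n p (h \<circ> g) y"
  using assms unfolding is_cset_def by metis

lemma Act_idm:
  assumes "is_cset Y" and "y \<in> Cr Y n"
  shows "Act Y n n (idm n) y = y"
  using assms unfolding is_cset_def by blast

lemma projmor_0_eq_prmor: "projmor k 0 = prmor k"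
  by (rule ext) (simp add: projmor_def prmor_def split: pt.splits)

lemma prmor_hom: "prmor k \<in> hom k (Suc k)"
  by (auto simp: hom_def prmor_def pts_def)

lemma endmor_hom: "endmor k d \<in> hom (Suc k) k"
  by (auto simp: hom_def endmor_def pts_def ep_def)

lemma endmor_comp_prmor: "endmor k d \<circ> prmor k = idm k"
  by (rule ext) (simp add: endmor_def prmor_def idm_def split: pt.splits)

lemma Act_endmor_Act_prmor:
  assumes "is_cset Y" and "y \<in> Cr Y k"
  shows "Act Y (Suc k) k (endmor k d) (Act Y k (Suc k) (prmor k) y) = y"
  using assms by (simp add: Act_comp prmor_hom endmor_hom endmor_comp_prmor Act_idm)

lemma restr_degenerate_eq_pt_as_box:
  assumes "is_cset Y" and "y \<in> Cr Y k"
  shows "restr Y k 1 (\<not> delta) (Act Y k (Suc k) (prmor k) y) = pt_as_box Y k delta y"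
proof (intro ext)
  fix m g
  show "restr Y k 1 (\<not> delta) (Act Y k (Suc k) (prmor k) y) m g = pt_as_box Y k delta y m g"
  proof (cases "g \<in> box k 1 (\<not> delta) m")
    case True
    then have "g \<in> hom (Suc k) m" by (simp add: box_def)
    with True show ?thesis
      using assms by (simp add: restr_def pt_as_box_def Act_comp prmor_hom)
  qed (simp add: restr_def pt_as_box_def)
qed

lemma normal_kan_fill_degenerate:
  assumes "normal_kan Y X f phi" and "1 \<le> k" and "c \<in> Cr Y k"
  shows "phi k 1 e (Act X k (Suc k) (prmor k) (f k c))
           (restr Y k 1 e (Act Y k (Suc k) (prmor k) c))
         = Act Y k (Suc k) (prmor k) c"
  using assms unfolding normal_kan_def
  by (erule_tac x=0 in allE) (simp add: projmor_0_eq_prmor)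

theorem lemma3p12:
  fixes Y :: "'a cset" and X :: "'b cset" and f :: "nat \<Rightarrow> 'a \<Rightarrow> 'b"
    and phi :: "('a, 'b) filler" and k :: nat and x :: 'b and y :: 'a and delta :: bool
  assumes "is_cset Y" and "is_cset X" and "is_cmap Y X f"
    and "uniform_kan Y X f phi" and "normal_kan Y X f phi"
    and "1 \<le> k" and "x \<in> Cr X k" and "y \<in> Cr Y k" and "f k y = x"
  shows "transport Y phi k delta (Act X k (k + 1) (prmor k) x) y = y"
proof -
  have "phi k 1 (\<not> delta) (Act X k (Suc k) (prmor k) x) (pt_as_box Y k delta y)
      = Act Y k (Suc k) (prmor k) y"
    using normal_kan_fill_degenerate[OF assms(5,6,8), of "\<not> delta"]
      restr_degenerate_eq_pt_as_box[OF assms(1,8)] assms(9)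
    by simp
  then show ?thesis
    using Act_endmor_Act_prmor[OF assms(1,8)] by (simp add: transport_def)
qed

end
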